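(* Let $n\ge 1$, let $v\in\mathbb{S}^{n-1}=\{v\in\mathbb{R}^n:\|v\|=1\}$, and for class parameters $\alpha_k>0$, $v_k\in\mathbb{S}^{n-1}$, $b_k\in\mathbb{R}$ define the logit $u_k(x)=-\alpha_k B^{v_k}(x)+b_k$. (Poincaré) Fix $x\in\mathbb{R}^n$; for all $K<0$ with $|K|$ small enough, $x$ lies in the Poincaré ball $\mathbb{P}^n_K$. Then, as $K\to 0^-$, $$B^{v}(x)\to -2\langle v,x\rangle,\qquad u_k(x)\to 2\alpha_k\langle v_k,x\rangle+b_k .$$ (Lorentz) Fix $x_s\in\mathbb{R}^n$ and, for each $K<0$, let $x=[x_t,x_s^\top]^\top\in\mathbb{L}^n_K$ with $x_t=\sqrt{-1/K+\|x_s\|^2}$. Then, as $K\to 0^-$, $$B^{v}(x)\to -\langle v,x_s\rangle,\qquad u_k(x)\to \alpha_k\langle v_k,x_s\rangle+b_k .$$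
   Context: For $K<0$, the Poincaré ball is $\mathbb{P}^n_K=\{x\in\mathbb{R}^n:\|x\|^2<-1/K\}$, and its Busemann function in direction $v\in\mathbb{S}^{n-1}$ (for the geodesic ray from the origin with initial unit velocity $v$) is $B^v(x)=\frac{1}{\sqrt{-K}}\log\!\left(\frac{\|v-\sqrt{-K}\,x\|^2}{1+K\|x\|^2}\right)$. The Lorentz model is $\mathbb{L}^n_K=\{x=[x_t,x_s^\top]^\top\in\mathbb{R}^{n+1}: -x_t^2+\|x_s\|^2=1/K,\ x_t>0\}$, with Busemann function $B^v(x)=\frac{1}{\sqrt{-K}}\log\!\left(\sqrt{-K}\,(x_t-\langle x_s,v\rangle)\right)$. Here $\langle\cdot,\cdot\rangle$ and $\|\cdot\|$ are the Euclidean inner product and norm. *)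

theory Defs
  imports "HOL-Analysis.Analysis"
begin

definition poincare_ball :: "real \<Rightarrow> 'a::euclidean_space set" where
  "poincare_ball K = {x. (norm x)\<^sup>2 < - 1 / K}"

definition busemann_P :: "real \<Rightarrow> 'a::euclidean_space \<Rightarrow> 'a \<Rightarrow> real" where
  "busemann_P K v x =
     (1 / sqrt (- K)) * ln ((norm (v - sqrt (- K) *\<^sub>R x))\<^sup>2 / (1 + K * (norm x)\<^sup>2))"

definition lorentz_model :: "real \<Rightarrow> (real \<times> 'a::euclidean_space) set" where
  "lorentz_model K = {(xt, xs). - xt\<^sup>2 + (norm xs)\<^sup>2 = 1 / K \<and> xt > 0}"

definition busemann_L :: "real \<Rightarrow> 'a::euclidean_space \<Rightarrow> real \<times> 'a \<Rightarrow> real" where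
  "busemann_L K v x = (1 / sqrt (- K)) * ln (sqrt (- K) * (fst x - inner (snd x) v))"

definition lorentz_lift :: "real \<Rightarrow> 'a::euclidean_space \<Rightarrow> real \<times> 'a" where
  "lorentz_lift K xs = (sqrt (- 1 / K + (norm xs)\<^sup>2), xs)"

end

theory Submission
  imports Defs
begin

text \<open>Substituting \<open>s = sqrt (-K)\<close>, both Busemann functions take the form \<open>h s / s\<close> with
  \<open>h 0 = 0\<close>, so their limits as \<open>K \<rightarrow> 0\<^sup>-\<close> are the derivatives \<open>h' 0\<close>: for the Poincare ball
  \<open>h s = ln ((1 - 2 s \<langle>v,x\<rangle> + s\<^sup>2 \<parallel>x\<parallel>\<^sup>2) / (1 - s\<^sup>2 \<parallel>x\<parallel>\<^sup>2))\<close> with \<open>h' 0 = -2 \<langle>v,x\<rangle>\<close>, and for the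
  Lorentz model \<open>h s = ln (sqrt (1 + s\<^sup>2 \<parallel>x\<^sub>s\<parallel>\<^sup>2) - s \<langle>x\<^sub>s,v\<rangle>)\<close> with \<open>h' 0 = -\<langle>x\<^sub>s,v\<rangle>\<close>.\<close>

lemma filterlim_sqrt_uminus_at_left_0:
  "filterlim (\<lambda>K::real. sqrt (- K)) (at_right 0) (at_left 0)"
proof -
  have "((\<lambda>K::real. sqrt (- K)) \<longlongrightarrow> 0) (at_left 0)"
    by (rule tendsto_eq_intros refl | simp)+
  moreover have "eventually (\<lambda>K::real. sqrt (- K) \<in> {0<..} \<and> sqrt (- K) \<noteq> 0) (at_left 0)"
    unfolding eventually_at_left_field by (intro exI[of _ "-1"]) simp
  ultimately show ?thesis
    by (simp add: filterlim_at)
qed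

lemma tendsto_sqrt_difference_quotient_at_left_0:
  assumes "(h has_real_derivative L) (at 0)" and "h 0 = 0"
    and "\<And>K. K < 0 \<Longrightarrow> f K = h (sqrt (- K)) / sqrt (- K)"
  shows "(f \<longlongrightarrow> L) (at_left 0)"
proof -
  have "((\<lambda>s. h s / s) \<longlongrightarrow> L) (at_right 0)"
    using assms(1,2) by (simp add: DERIV_def filterlim_at_split)
  then have "((\<lambda>K. h (sqrt (- K)) / sqrt (- K)) \<longlongrightarrow> L) (at_left 0)"
    by (rule filterlim_compose[OF _ filterlim_sqrt_uminus_at_left_0])
  moreover have "eventually (\<lambda>K. h (sqrt (- K)) / sqrt (- K) = f K) (at_left 0)"
    unfolding eventually_at_left_field by (intro exI[of _ "-1"]) (simp add: assms(3))
  ultimately show ?thesis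
    by (rule Lim_transform_eventually)
qed

lemma eventually_mem_poincare_ball_at_left_0:
  "eventually (\<lambda>K. x \<in> poincare_ball K) (at_left 0)"
proof -
  have "((\<lambda>K. - K * (norm x)\<^sup>2) \<longlongrightarrow> - 0 * (norm x)\<^sup>2) (at_left (0::real))"
    by (intro tendsto_intros)
  then have "eventually (\<lambda>K. - K * (norm x)\<^sup>2 < 1) (at_left 0)"
    by (rule order_tendstoD) simp
  moreover have "eventually (\<lambda>K::real. K < 0) (at_left 0)"
    by (simp add: eventually_at_filter)
  ultimately show ?thesis
    by eventually_elim (simp add: poincare_ball_def field_simps)
qed

lemma norm_diff_scaleR_unit_square:
  fixes v x :: "'a::real_inner"
  assumes "norm v = 1"
  shows "(norm (v - s *\<^sub>R x))\<^sup>2 = 1 - 2 * s * inner v x + s\<^sup>2 * (norm x)\<^sup>2"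
proof -
  have "(norm (v - s *\<^sub>R x))\<^sup>2 = inner (v - s *\<^sub>R x) (v - s *\<^sub>R x)"
    by (rule power2_norm_eq_inner)
  also have "\<dots> = inner v v - 2 * s * inner v x + s\<^sup>2 * inner x x"
    by (simp add: inner_diff_left inner_diff_right inner_commute algebra_simps power2_eq_square)
  finally show ?thesis
    using assms by (simp add: power2_norm_eq_inner[symmetric])
qed

lemma busemann_P_eq_sqrt_quotient:
  fixes v x :: "'a::euclidean_space"
  assumes "norm v = 1" and "K < 0"
  shows "busemann_P K v x =
    (let s = sqrt (- K) in
       ln ((1 - 2 * s * inner v x + s\<^sup>2 * (norm x)\<^sup>2) / (1 - s\<^sup>2 * (norm x)\<^sup>2)) / s)"
  using assms by (simp add: busemann_P_def norm_diff_scaleR_unit_square Let_def)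

lemma tendsto_busemann_P_at_left_0:
  fixes v x :: "'a::euclidean_space"
  assumes "norm v = 1"
  shows "((\<lambda>K. busemann_P K v x) \<longlongrightarrow> - 2 * inner v x) (at_left 0)"
proof (rule tendsto_sqrt_difference_quotient_at_left_0)
  show "((\<lambda>s. ln ((1 - 2 * s * inner v x + s\<^sup>2 * (norm x)\<^sup>2) / (1 - s\<^sup>2 * (norm x)\<^sup>2)))
      has_real_derivative - 2 * inner v x) (at 0)"
    by (auto intro!: derivative_eq_intros)
qed (simp_all add: busemann_P_eq_sqrt_quotient[OF assms] Let_def)

lemma lorentz_lift_mem_lorentz_model:
  assumes "K < 0"
  shows "lorentz_lift K xs \<in> lorentz_model K"
proof -
  have "1 / K < 0"
    using assms by simp
  then have "- 1 / K + (norm xs)\<^sup>2 > 0"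
    using zero_le_power2[of "norm xs"] by linarith
  then show ?thesis
    by (simp add: lorentz_lift_def lorentz_model_def)
qed

lemma busemann_L_lorentz_lift_eq_sqrt_quotient:
  fixes v xs :: "'a::euclidean_space"
  assumes "K < 0"
  shows "busemann_L K v (lorentz_lift K xs) =
    (let s = sqrt (- K) in ln (sqrt (1 + s\<^sup>2 * (norm xs)\<^sup>2) - s * inner xs v) / s)"
proof -
  have "sqrt (- K) * sqrt (- 1 / K + (norm xs)\<^sup>2) = sqrt (- K * (- 1 / K + (norm xs)\<^sup>2))"
    by (rule real_sqrt_mult[symmetric])
  also have "- K * (- 1 / K + (norm xs)\<^sup>2) = 1 + (sqrt (- K))\<^sup>2 * (norm xs)\<^sup>2"
    using assms by (simp add: field_simps)
  finally show ?thesis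
    by (simp add: busemann_L_def lorentz_lift_def right_diff_distrib Let_def)
qed

lemma tendsto_busemann_L_lorentz_lift_at_left_0:
  fixes v xs :: "'a::euclidean_space"
  shows "((\<lambda>K. busemann_L K v (lorentz_lift K xs)) \<longlongrightarrow> - inner v xs) (at_left 0)"
proof (rule tendsto_sqrt_difference_quotient_at_left_0)
  show "((\<lambda>s. ln (sqrt (1 + s\<^sup>2 * (norm xs)\<^sup>2) - s * inner xs v))
      has_real_derivative - inner v xs) (at 0)"
    by (auto intro!: derivative_eq_intros simp: inner_commute)
qed (simp_all add: busemann_L_lorentz_lift_eq_sqrt_quotient Let_def)

theorem theorem1:
  fixes v :: "'a::euclidean_space"
    and \<alpha> :: "'k \<Rightarrow> real" and vk :: "'k \<Rightarrow> 'a" and b :: "'k \<Rightarrow> real"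
    and x xs :: 'a
  assumes "norm v = 1"
    and "\<And>k. \<alpha> k > 0"
    and "\<And>k. norm (vk k) = 1"
  shows
    "(\<exists>\<delta>>0. \<forall>K. - \<delta> < K \<and> K < 0 \<longrightarrow> x \<in> poincare_ball K)
     \<and> ((\<lambda>K. busemann_P K v x) \<longlongrightarrow> - 2 * inner v x) (at_left 0)
     \<and> (\<forall>k. ((\<lambda>K. - \<alpha> k * busemann_P K (vk k) x + b k)
              \<longlongrightarrow> 2 * \<alpha> k * inner (vk k) x + b k) (at_left 0))
     \<and> (\<forall>K<0. lorentz_lift K xs \<in> lorentz_model K)
     \<and> ((\<lambda>K. busemann_L K v (lorentz_lift K xs)) \<longlongrightarrow> - inner v xs) (at_left 0)
     \<and> (\<forall>k. ((\<lambda>K. - \<alpha> k * busemann_L K (vk k) (lorentz_lift K xs) + b k)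
              \<longlongrightarrow> \<alpha> k * inner (vk k) xs + b k) (at_left 0))"
proof (intro conjI allI impI)
  show "\<exists>\<delta>>0. \<forall>K. - \<delta> < K \<and> K < 0 \<longrightarrow> x \<in> poincare_ball K"
    using eventually_mem_poincare_ball_at_left_0[of x]
    unfolding eventually_at_left_field by (metis add.inverse_inverse neg_0_less_iff_less)
  show "((\<lambda>K. busemann_P K v x) \<longlongrightarrow> - 2 * inner v x) (at_left 0)"
    using assms(1) by (rule tendsto_busemann_P_at_left_0)
  show "((\<lambda>K. - \<alpha> k * busemann_P K (vk k) x + b k)
      \<longlongrightarrow> 2 * \<alpha> k * inner (vk k) x + b k) (at_left 0)" for k
    using tendsto_busemann_P_at_left_0[OF assms(3)[of k], of x]
    by (auto intro!: tendsto_eq_intros)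
  show "lorentz_lift K xs \<in> lorentz_model K" if "K < 0" for K
    using that by (rule lorentz_lift_mem_lorentz_model)
  show "((\<lambda>K. busemann_L K v (lorentz_lift K xs)) \<longlongrightarrow> - inner v xs) (at_left 0)"
    by (rule tendsto_busemann_L_lorentz_lift_at_left_0)
  show "((\<lambda>K. - \<alpha> k * busemann_L K (vk k) (lorentz_lift K xs) + b k)
      \<longlongrightarrow> \<alpha> k * inner (vk k) xs + b k) (at_left 0)" for k
    using tendsto_busemann_L_lorentz_lift_at_left_0[of "vk k" xs]
    by (auto intro!: tendsto_eq_intros)
qed

end
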